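(* Let $N\ge1$, $0\le q<N/2$, let $0<\varepsilon<N/2-q$, and define \[ \phi_0(x):=\begin{cases}|x|^{-N}(-\log|x|)^{-\frac N2-1+\varepsilon}, & |x|<1/e,\\ 0, & |x|\ge 1/e.\end{cases} \] Then (i) $\phi_0\in X_q$ (in particular $\phi_0\in L^1(\mathbb{R}^N)$); (ii) for every $T>0$ there is no constant $\gamma_0>0$ such that $\int_{B(\tau)}\phi_0(x)\,dx\le \gamma_0|\log\tau|^{-N/2}$ for all $0<\tau<T$.
   Context: $X_q:=\{\phi\in L^1_{\rm loc}(\mathbb{R}^N): \int_{\mathbb{R}^N}|\phi|[\log(e+|\phi|)]^q\,dx<\infty\}$; $B(\tau):=\{x\in\mathbb{R}^N: |x|<\tau\}$. *)

theory Defs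
  imports "HOL-Analysis.Analysis"
begin

definition L1_loc :: "('a::euclidean_space \<Rightarrow> real) set" where
  "L1_loc = {\<phi>. \<phi> \<in> borel_measurable lebesgue \<and>
                 (\<forall>K. compact K \<longrightarrow> set_integrable lebesgue K \<phi>)}"

definition X_space :: "real \<Rightarrow> ('a::euclidean_space \<Rightarrow> real) set" where
  "X_space q = {\<phi>. \<phi> \<in> L1_loc \<and>
      (\<integral>\<^sup>+ x. ennreal (\<bar>\<phi> x\<bar> * (ln (exp 1 + \<bar>\<phi> x\<bar>)) powr q) \<partial>lebesgue) < \<infinity>}"

definition phi0 :: "real \<Rightarrow> 'a::euclidean_space \<Rightarrow> real" where
  "phi0 \<epsilon> x = (if norm x < exp (-1)
      then norm x powr (- real DIM('a)) * (- ln (norm x)) powr (- real DIM('a) / 2 - 1 + \<epsilon>)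
      else 0)"

end

theory Submission
  imports Defs "HOL-Real_Asymp.Real_Asymp"
begin

text \<open>With \<open>N = DIM('a)\<close> and \<open>a = N/2 + 1 - \<epsilon> > 1\<close>, polar coordinates turn \<open>\<phi>\<^sub>0\<close> into the
  one-dimensional density \<open>N \<omega>\<^sub>N (-ln r) powr (-a) / r\<close>, which has the explicit primitive
  \<open>N \<omega>\<^sub>N (-ln r) powr (1 - a) / (a - 1)\<close>. Hence \<open>\<phi>\<^sub>0\<close> is integrable and its integral over
  \<open>B(\<tau>)\<close> is a constant times \<open>|ln \<tau>| powr (\<epsilon> - N/2)\<close>, which eventually exceeds every
  \<open>\<gamma>\<^sub>0 |ln \<tau>| powr (-N/2)\<close> as \<open>\<tau> \<rightarrow> 0\<close>. For the Orlicz condition, \<open>\<phi>\<^sub>0(x) \<le> |x| powr (-N)\<close>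
  gives \<open>ln (e + \<phi>\<^sub>0(x)) \<le> (N + 1) |ln |x||\<close>, so the integrand is dominated by the same profile
  with \<open>a\<close> replaced by \<open>a - q > 1\<close>.\<close>

text \<open>The library's \<open>measure_eqI_lessThan\<close> works with the rays \<open>{x<..}\<close>, which have infinite
  measure under the distribution of the norm.\<close>

lemma measure_eqI_Iio:
  fixes M N :: "real measure"
  assumes sets: "sets M = sets borel" "sets N = sets borel"
  assumes fin: "\<And>x. emeasure M {..<x} < \<infinity>"
  assumes eq: "\<And>x. emeasure M {..<x} = emeasure N {..<x}"
  shows "M = N"
proof (rule measure_eqI_generator_eq_countable)
  let ?E = "range (\<lambda>a::real. {..<a})"
  have "{..<a} \<inter> {..<b} = {..<min a b}" for a b :: real
    by auto
  then show "Int_stable ?E"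
    by (auto simp: Int_stable_def)
  show "?E \<subseteq> Pow UNIV" "sets M = sigma_sets UNIV ?E" "sets N = sigma_sets UNIV ?E"
    unfolding sets borel_Iio by auto
  have "\<exists>q\<in>\<rat>. x < q" for x :: real
    using Rats_dense_in_real[of x "x + 1"] by auto
  with fin show "(\<lambda>a. {..<a}) ` \<rat> \<subseteq> ?E" "(\<Union>i\<in>\<rat>. {..<i::real}) = UNIV"
    "\<And>A. A \<in> (\<lambda>a. {..<a}) ` \<rat> \<Longrightarrow> emeasure M A \<noteq> \<infinity>"
    by (auto simp: less_top)
qed (auto intro: eq countable_rat)

lemma distr_norm_lborel:
  "distr lborel borel (norm :: 'a::euclidean_space \<Rightarrow> real) =
   density lborel (\<lambda>r. ennreal (unit_ball_vol DIM('a) * DIM('a) * r ^ (DIM('a) - 1)) * indicator {0<..} r)"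
  (is "?M = ?D")
proof (rule measure_eqI_Iio)
  fix x :: real
  let ?f = "\<lambda>r. unit_ball_vol DIM('a) * DIM('a) * r ^ (DIM('a) - 1)"
  have M: "emeasure ?M {..<x} = (if x \<le> 0 then 0 else ennreal (unit_ball_vol DIM('a) * x ^ DIM('a)))"
  proof -
    have "emeasure ?M {..<x} = emeasure lborel (ball (0::'a) x)"
      by (subst emeasure_distr) (auto intro!: arg_cong[where f="emeasure lborel"] simp: ball_def)
    then show ?thesis
      using emeasure_ball[of x "0::'a"] by (auto simp: ball_empty)
  qed
  then show "emeasure ?M {..<x} < \<infinity>"
    by auto
  have "emeasure ?D {..<x} = (\<integral>\<^sup>+r. ennreal (?f r) * indicator {0<..} r * indicator {..<x} r \<partial>lborel)"
    by (subst emeasure_density) auto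
  also have "\<dots> = (\<integral>\<^sup>+r. ennreal (?f r) * indicator {0..max 0 x} r \<partial>lborel)"
    using AE_lborel_singleton[of 0] AE_lborel_singleton[of x]
    by (intro nn_integral_cong_AE, eventually_elim) (auto simp: indicator_def)
  also have "\<dots> = ennreal (unit_ball_vol DIM('a) * max 0 x ^ DIM('a) - unit_ball_vol DIM('a) * 0 ^ DIM('a))"
    by (rule nn_integral_FTC_Icc[where F="\<lambda>r. unit_ball_vol DIM('a) * r ^ DIM('a)"])
       (auto intro!: derivative_eq_intros)
  finally show "emeasure ?M {..<x} = emeasure ?D {..<x}"
    using M by (simp add: max_def)
qed auto

lemma nn_integral_radial:
  fixes g :: "real \<Rightarrow> ennreal"
  assumes [measurable]: "g \<in> borel_measurable borel"
  shows "(\<integral>\<^sup>+x. g (norm (x::'a::euclidean_space)) \<partial>lborel) =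
    (\<integral>\<^sup>+r. ennreal (unit_ball_vol DIM('a) * DIM('a) * r ^ (DIM('a) - 1)) * indicator {0<..} r * g r \<partial>lborel)"
proof -
  have "(\<integral>\<^sup>+x. g (norm (x::'a)) \<partial>lborel) = (\<integral>\<^sup>+r. g r \<partial>distr lborel borel (norm :: 'a \<Rightarrow> real))"
    by (subst nn_integral_distr) auto
  then show ?thesis
    unfolding distr_norm_lborel by (subst (asm) nn_integral_density) auto
qed

lemma nn_integral_inverse_log_power:
  fixes b \<tau> :: real
  assumes b: "1 < b" and \<tau>: "0 < \<tau>" "\<tau> < 1"
  shows "(\<integral>\<^sup>+r. ennreal (indicator {0<..<\<tau>} r * ((- ln r) powr (- b) / r)) \<partial>lborel)
     = ennreal ((- ln \<tau>) powr (1 - b) / (b - 1))"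
proof -
  define F where "F r = (- ln r) powr (1 - b) / (b - 1)" for r
  define f where "f r = (- ln r) powr (- b) / r" for r
  have ln_neg: "0 < - ln r" if "0 < r" "r \<le> \<tau>" for r
    using that \<tau> by simp
  have F_deriv: "DERIV F r :> f r" if "0 < r" "r < \<tau>" for r
  proof -
    have "DERIV F r :> (1 - b) * (- ln r) powr (1 - b - 1) * (- (1 / r)) / (b - 1)"
      unfolding F_def using ln_neg[of r] that b by (auto intro!: derivative_eq_intros)
    also have "(1 - b) * (- ln r) powr (1 - b - 1) * (- (1 / r)) / (b - 1) = f r"
      unfolding f_def using b that by (simp add: field_simps)
    finally show ?thesis .
  qed
  have f_cont: "isCont f r" if "0 < r" "r < \<tau>" for r
    unfolding f_def using ln_neg[of r] that by (intro continuous_intros) auto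
  have F_0: "((F \<circ> real_of_ereal) \<longlongrightarrow> 0) (at_right (ereal 0))"
    unfolding ereal_tendsto_simps1 F_def using b by real_asymp
  have F_\<tau>: "((F \<circ> real_of_ereal) \<longlongrightarrow> F \<tau>) (at_left (ereal \<tau>))"
    unfolding ereal_tendsto_simps1 F_def using ln_neg[of \<tau>] \<tau> b
    by (intro tendsto_intros) auto
  have f_nonneg: "0 \<le> f r" if "0 < r" for r
    unfolding f_def using that by simp
  have FTC: "set_integrable lborel (einterval (ereal 0) (ereal \<tau>)) f
      \<and> (LBINT r=ereal 0..ereal \<tau>. f r) = F \<tau> - 0"
    by (intro conjI interval_integral_FTC_nonneg[OF _ _ _ _ F_0 F_\<tau>])
       (use \<tau> in \<open>auto intro: F_deriv f_cont f_nonneg\<close>)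
  have "(\<integral>\<^sup>+r. ennreal (indicator {0<..<\<tau>} r * f r) \<partial>lborel)
      = ennreal (LINT r|lborel. indicator {0<..<\<tau>} r * f r)"
    using FTC \<tau> by (intro nn_integral_eq_integral) (auto simp: set_integrable_def f_def indicator_def)
  also have "(LINT r|lborel. indicator {0<..<\<tau>} r * f r) = F \<tau>"
    using FTC \<tau> by (simp add: interval_lebesgue_integral_def set_lebesgue_integral_def f_def)
  finally show ?thesis
    by (simp add: F_def f_def)
qed

lemma nn_integral_ball_log_singularity:
  fixes b \<tau> :: real
  assumes b: "1 < b" and \<tau>: "0 < \<tau>" "\<tau> < 1"
  shows "(\<integral>\<^sup>+x. ennreal (indicator (ball 0 \<tau>) x *
              (norm (x::'a::euclidean_space) powr (- real DIM('a)) * (- ln (norm x)) powr (- b))) \<partial>lborel)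
     = ennreal (unit_ball_vol DIM('a) * DIM('a) * ((- ln \<tau>) powr (1 - b) / (b - 1)))"
proof -
  let ?c = "unit_ball_vol DIM('a) * DIM('a)"
  let ?g = "\<lambda>r. ennreal (indicator {..<\<tau>} r * (r powr (- real DIM('a)) * (- ln r) powr (- b)))"
  have polar_density: "ennreal (?c * r ^ (DIM('a) - 1)) * indicator {0<..} r * ?g r
      = ennreal ?c * ennreal (indicator {0<..<\<tau>} r * ((- ln r) powr (- b) / r))" for r :: real
  proof (cases "0 < r \<and> r < \<tau>")
    case True
    have "1 \<le> DIM('a)"
      by (simp add: Suc_leI)
    with True have power_cancel: "r ^ (DIM('a) - 1) * r powr (- real DIM('a)) = 1 / r"
      by (simp add: powr_minus powr_realpow power_diff divide_inverse)
    have "?c * r ^ (DIM('a) - 1) * (r powr (- real DIM('a)) * (- ln r) powr (- b))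
        = ?c * ((r ^ (DIM('a) - 1) * r powr (- real DIM('a))) * (- ln r) powr (- b))"
      by (simp only: mult_ac)
    also have "\<dots> = ?c * ((- ln r) powr (- b) / r)"
      by (simp only: power_cancel) simp
    finally have "?c * r ^ (DIM('a) - 1) * (r powr (- real DIM('a)) * (- ln r) powr (- b))
        = ?c * ((- ln r) powr (- b) / r)" .
    moreover have "0 \<le> ?c * r ^ (DIM('a) - 1)" "0 \<le> ?c"
      using True by auto
    ultimately show ?thesis
      using True by (simp add: indicator_def ennreal_mult[symmetric])
  qed (auto simp: indicator_def)
  have "(\<integral>\<^sup>+x. ennreal (indicator (ball 0 \<tau>) x *
            (norm (x::'a) powr (- real DIM('a)) * (- ln (norm x)) powr (- b))) \<partial>lborel)
      = (\<integral>\<^sup>+x. ?g (norm (x::'a)) \<partial>lborel)"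
    by (intro nn_integral_cong) (simp add: indicator_def)
  also have "\<dots> = (\<integral>\<^sup>+r. ennreal (?c * r ^ (DIM('a) - 1)) * indicator {0<..} r * ?g r \<partial>lborel)"
    by (rule nn_integral_radial) measurable
  also have "\<dots> = (\<integral>\<^sup>+r. ennreal ?c * ennreal (indicator {0<..<\<tau>} r * ((- ln r) powr (- b) / r)) \<partial>lborel)"
    by (simp only: polar_density)
  also have "\<dots> = ennreal ?c * ennreal ((- ln \<tau>) powr (1 - b) / (b - 1))"
    using nn_integral_inverse_log_power[OF b \<tau>] by (subst nn_integral_cmult) auto
  also have "\<dots> = ennreal (?c * ((- ln \<tau>) powr (1 - b) / (b - 1)))"
    by (rule ennreal_mult[symmetric]) (use b in auto)
  finally show ?thesis .
qed

lemma ln_exp1_add_le: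
  fixes L N y :: real
  assumes L: "1 \<le> L" and N: "1 \<le> N" and y: "0 \<le> y" "y \<le> exp (N * L)"
  shows "ln (exp 1 + y) \<le> (N + 1) * L"
proof -
  have "exp 1 \<le> exp (N * L)"
    using mult_mono[OF N L] N by simp
  then have "exp 1 + y \<le> 2 * exp (N * L)"
    using y by linarith
  then have "ln (exp 1 + y) \<le> ln (2 * exp (N * L))"
    using y by (intro ln_mono) (auto intro: add_pos_nonneg)
  also have "\<dots> = ln 2 + N * L"
    by (simp add: ln_mult)
  also have "\<dots> \<le> (N + 1) * L"
    using ln_2_less_1 L by (simp add: algebra_simps)
  finally show ?thesis .
qed

lemma mult_ln_exp1_add_powr_le:
  fixes L N a q :: real
  assumes L: "1 \<le> L" and N: "1 \<le> N" and a: "0 \<le> a" and q: "0 \<le> q"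
  defines "y \<equiv> exp (N * L) * L powr (- a)"
  shows "y * ln (exp 1 + y) powr q \<le> (N + 1) powr q * (exp (N * L) * L powr (q - a))"
proof -
  have "L powr (- a) \<le> L powr 0"
    using L a by (intro powr_mono) auto
  then have "y \<le> exp (N * L)"
    using L by (simp add: y_def mult_left_le)
  moreover have "0 \<le> y"
    by (simp add: y_def)
  moreover from this have "1 \<le> exp 1 + y"
    using exp_ge_add_one_self[of 1] by linarith
  ultimately have "ln (exp 1 + y) powr q \<le> ((N + 1) * L) powr q"
    using ln_exp1_add_le[OF L N] q by (intro powr_mono2 ln_ge_zero) auto
  also have "\<dots> = (N + 1) powr q * L powr q"
    using L N by (simp add: powr_mult)
  finally have "y * ln (exp 1 + y) powr q \<le> y * ((N + 1) powr q * L powr q)"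
    using \<open>0 \<le> y\<close> by (simp add: mult_left_mono)
  also have "\<dots> = (N + 1) powr q * (exp (N * L) * L powr (q - a))"
    using L by (simp add: y_def powr_add[symmetric] algebra_simps)
  finally show ?thesis .
qed

lemma integrable_imp_L1_loc:
  assumes "integrable lebesgue f"
  shows "f \<in> L1_loc"
  unfolding L1_loc_def
proof safe
  show "f \<in> borel_measurable lebesgue"
    using assms by simp
  fix K :: "'a set"
  assume "compact K"
  then have "K \<in> sets lebesgue"
    by (simp add: fmeasurableD lmeasurable_compact)
  then show "set_integrable lebesgue K f"
    unfolding set_integrable_def using assms by (rule integrable_mult_indicator)
qed

lemma borel_measurable_ball_log_profile [measurable]:
  "(\<lambda>x::'a::euclidean_space. indicator (ball 0 t) x * (norm x powr c * (- ln (norm x)) powr d))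
    \<in> borel_measurable borel"
  by (intro borel_measurable_times borel_measurable_indicator) measurable

lemma phi0_eq_indicator_ball:
  "phi0 \<epsilon> x = indicator (ball 0 (exp (-1))) x *
     (norm x powr (- real DIM('a)) * (- ln (norm x)) powr (- (real DIM('a) / 2 + 1 - \<epsilon>)))"
  for x :: "'a::euclidean_space"
  by (simp add: phi0_def indicator_def algebra_simps)

lemma phi0_nonneg: "0 \<le> phi0 \<epsilon> x"
  by (simp add: phi0_def)

lemma borel_measurable_phi0: "phi0 \<epsilon> \<in> borel_measurable borel"
  unfolding phi0_eq_indicator_ball[abs_def] by (rule borel_measurable_ball_log_profile)

lemma nn_integral_phi0_ball:
  fixes \<epsilon> \<tau> :: real
  assumes \<epsilon>: "\<epsilon> < real DIM('a) / 2" and \<tau>: "0 < \<tau>" "\<tau> \<le> exp (-1)"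
  shows "(\<integral>\<^sup>+x. ennreal (indicator (ball 0 \<tau>) x * phi0 \<epsilon> (x::'a::euclidean_space)) \<partial>lborel)
    = ennreal (unit_ball_vol DIM('a) * DIM('a) *
        ((- ln \<tau>) powr (\<epsilon> - DIM('a) / 2) / (DIM('a) / 2 - \<epsilon>)))"
proof -
  define a where "a = real DIM('a) / 2 + 1 - \<epsilon>"
  have "\<tau> < 1"
    using \<tau> exp_less_one_iff[of "-1::real"] by linarith
  have "(\<integral>\<^sup>+x. ennreal (indicator (ball 0 \<tau>) x * phi0 \<epsilon> (x::'a)) \<partial>lborel)
      = (\<integral>\<^sup>+x. ennreal (indicator (ball 0 \<tau>) x *
          (norm (x::'a) powr (- real DIM('a)) * (- ln (norm x)) powr (- a))) \<partial>lborel)"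
    using \<tau> by (intro nn_integral_cong) (auto simp: phi0_eq_indicator_ball indicator_def a_def)
  also have "\<dots> = ennreal (unit_ball_vol DIM('a) * DIM('a) * ((- ln \<tau>) powr (1 - a) / (a - 1)))"
    using \<epsilon> \<tau> \<open>\<tau> < 1\<close> by (intro nn_integral_ball_log_singularity) (auto simp: a_def)
  finally show ?thesis
    by (simp add: a_def)
qed

lemma integrable_phi0:
  assumes "\<epsilon> < real DIM('a) / 2"
  shows "integrable lebesgue (phi0 \<epsilon> :: 'a::euclidean_space \<Rightarrow> real)"
proof -
  have "(\<integral>\<^sup>+x. ennreal (norm (phi0 \<epsilon> x)) \<partial>(lborel :: 'a measure))
      = (\<integral>\<^sup>+x. ennreal (indicator (ball 0 (exp (-1))) x * phi0 \<epsilon> (x::'a)) \<partial>lborel)"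
    by (intro nn_integral_cong) (simp add: phi0_eq_indicator_ball indicator_def)
  also have "\<dots> = ennreal (unit_ball_vol DIM('a) * DIM('a) *
      ((- ln (exp (-1))) powr (\<epsilon> - DIM('a) / 2) / (DIM('a) / 2 - \<epsilon>)))"
    using assms by (intro nn_integral_phi0_ball) auto
  finally have "(\<integral>\<^sup>+x. ennreal (norm (phi0 \<epsilon> x)) \<partial>(lborel :: 'a measure)) < \<infinity>"
    by simp
  then have "integrable lborel (phi0 \<epsilon> :: 'a \<Rightarrow> real)"
    by (intro integrableI_bounded) (simp_all add: borel_measurable_phi0)
  then show ?thesis
    by (simp add: integrable_completion borel_measurable_phi0)
qed

lemma set_integral_phi0_ball:
  fixes \<epsilon> \<tau> :: real
  assumes \<epsilon>: "\<epsilon> < real DIM('a) / 2" and \<tau>: "0 < \<tau>" "\<tau> \<le> exp (-1)"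
  shows "(LINT x:ball 0 \<tau>|lebesgue. phi0 \<epsilon> (x::'a::euclidean_space))
    = unit_ball_vol DIM('a) * DIM('a) * ((- ln \<tau>) powr (\<epsilon> - DIM('a) / 2) / (DIM('a) / 2 - \<epsilon>))"
proof -
  have meas: "(\<lambda>x::'a. indicator (ball 0 \<tau>) x * phi0 \<epsilon> x) \<in> borel_measurable lborel"
    unfolding measurable_lborel2
    by (intro borel_measurable_times borel_measurable_indicator borel_measurable_phi0) simp
  have "(LINT x:ball 0 \<tau>|lebesgue. phi0 \<epsilon> (x::'a)) = (LINT x|lborel. indicator (ball 0 \<tau>) x * phi0 \<epsilon> (x::'a))"
    unfolding set_lebesgue_integral_def by (simp add: integral_completion[OF meas])
  also have "\<dots> = enn2real (\<integral>\<^sup>+x. ennreal (indicator (ball 0 \<tau>) x * phi0 \<epsilon> (x::'a)) \<partial>lborel)"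
    using meas by (intro integral_eq_nn_integral) (auto simp: phi0_nonneg)
  also have "\<dots> = unit_ball_vol DIM('a) * DIM('a) *
      ((- ln \<tau>) powr (\<epsilon> - DIM('a) / 2) / (DIM('a) / 2 - \<epsilon>))"
    using \<epsilon> by (simp add: nn_integral_phi0_ball[OF \<epsilon> \<tau>])
  finally show ?thesis .
qed

lemma set_integral_phi0_ball_not_log_bounded:
  fixes \<epsilon> T \<gamma> :: real
  assumes \<epsilon>: "0 < \<epsilon>" "\<epsilon> < real DIM('a) / 2" and T: "0 < T"
  shows "\<exists>\<tau>. 0 < \<tau> \<and> \<tau> < T \<and> \<tau> \<noteq> 1 \<and>
    \<gamma> * \<bar>ln \<tau>\<bar> powr (- real DIM('a) / 2) < (LINT x:ball 0 \<tau>|lebesgue. phi0 \<epsilon> (x::'a::euclidean_space))"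
proof -
  define C where "C = unit_ball_vol DIM('a) * DIM('a) / (DIM('a) / 2 - \<epsilon>)"
  have "0 < C"
    using \<epsilon> by (simp add: C_def)
  then have "\<forall>\<^sub>F \<tau> in at_right 0.
      \<gamma> * (- ln \<tau>) powr (- real DIM('a) / 2) < C * (- ln \<tau>) powr (\<epsilon> - DIM('a) / 2)"
    using \<epsilon> by real_asymp
  moreover have "\<forall>\<^sub>F \<tau> in at_right 0. \<tau> \<in> {0<..<min T (exp (-1))}"
    using T by (intro eventually_at_right_real) simp
  ultimately have "\<forall>\<^sub>F \<tau> in at_right 0.
      \<gamma> * (- ln \<tau>) powr (- real DIM('a) / 2) < C * (- ln \<tau>) powr (\<epsilon> - DIM('a) / 2)
      \<and> \<tau> \<in> {0<..<min T (exp (-1))}"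
    by (rule eventually_conj)
  then obtain \<tau> where \<tau>: "0 < \<tau>" "\<tau> < T" "\<tau> < exp (-1)"
    and bound: "\<gamma> * (- ln \<tau>) powr (- real DIM('a) / 2) < C * (- ln \<tau>) powr (\<epsilon> - DIM('a) / 2)"
    using eventually_happens'[OF trivial_limit_at_right_real] by auto
  have "\<tau> < 1"
    using \<tau> exp_less_one_iff[of "-1::real"] by linarith
  then have "\<bar>ln \<tau>\<bar> = - ln \<tau>"
    using \<tau> by simp
  with \<tau> \<open>\<tau> < 1\<close> bound show ?thesis
    using set_integral_phi0_ball[OF \<epsilon>(2), of \<tau>]
    by (intro exI[of _ \<tau>]) (simp add: C_def)
qed

lemma phi0_orlicz_integrand_le:
  fixes x :: "'a::euclidean_space"
  assumes q: "0 \<le> q" and \<epsilon>: "\<epsilon> < real DIM('a) / 2"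
  shows "\<bar>phi0 \<epsilon> x\<bar> * ln (exp 1 + \<bar>phi0 \<epsilon> x\<bar>) powr q \<le> (DIM('a) + 1) powr q *
    (indicator (ball 0 (exp (-1))) x *
      (norm x powr (- real DIM('a)) * (- ln (norm x)) powr (- (real DIM('a) / 2 + 1 - \<epsilon> - q))))"
proof (cases "x \<in> ball 0 (exp (-1)) \<and> x \<noteq> 0")
  case True
  define N where "N = real DIM('a)"
  define a where "a = N / 2 + 1 - \<epsilon>"
  define L where "L = - ln (norm x)"
  have "ln (norm x) < ln (exp (-1))"
    using True by (subst ln_less_cancel_iff) auto
  then have L: "1 \<le> L"
    by (simp add: L_def)
  have N: "1 \<le> N"
    by (simp add: N_def Suc_leI)
  have norm_powr: "norm x powr (- N) = exp (N * L)"
    unfolding powr_def L_def using True by simp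
  have "phi0 \<epsilon> x = norm x powr (- N) * L powr (- a)"
    using True by (simp add: phi0_eq_indicator_ball N_def a_def L_def)
  then have "phi0 \<epsilon> x = exp (N * L) * L powr (- a)"
    by (simp only: norm_powr)
  moreover have "0 \<le> a"
    using \<epsilon> by (simp add: a_def N_def)
  ultimately have "\<bar>phi0 \<epsilon> x\<bar> * ln (exp 1 + \<bar>phi0 \<epsilon> x\<bar>) powr q
      \<le> (N + 1) powr q * (norm x powr (- N) * L powr (q - a))"
    using mult_ln_exp1_add_powr_le[OF L N _ q, of a] phi0_nonneg[of \<epsilon> x] by (simp add: norm_powr)
  then show ?thesis
    using True by (simp add: N_def a_def L_def add.commute)
qed (auto simp: phi0_eq_indicator_ball)

lemma phi0_in_X_space:
  assumes q: "0 \<le> q" and \<epsilon>: "\<epsilon> < real DIM('a) / 2 - q"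
  shows "(phi0 \<epsilon> :: 'a::euclidean_space \<Rightarrow> real) \<in> X_space q"
proof -
  define b where "b = real DIM('a) / 2 + 1 - \<epsilon> - q"
  have "1 < b" "exp (-1) < (1::real)"
    using \<epsilon> by (auto simp: b_def)
  have \<epsilon>': "\<epsilon> < real DIM('a) / 2"
    using \<epsilon> q by linarith
  have "(\<integral>\<^sup>+x. ennreal (\<bar>phi0 \<epsilon> x\<bar> * ln (exp 1 + \<bar>phi0 \<epsilon> x\<bar>) powr q) \<partial>(lebesgue :: 'a measure))
      = (\<integral>\<^sup>+x. ennreal (\<bar>phi0 \<epsilon> x\<bar> * ln (exp 1 + \<bar>phi0 \<epsilon> x\<bar>) powr q) \<partial>(lborel :: 'a measure))"
    by (rule nn_integral_completion)
  also have "\<dots> \<le> (\<integral>\<^sup>+x. ennreal ((DIM('a) + 1) powr q) * ennreal (indicator (ball 0 (exp (-1))) x *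
      (norm (x::'a) powr (- real DIM('a)) * (- ln (norm x)) powr (- b))) \<partial>lborel)"
    using phi0_orlicz_integrand_le[OF q \<epsilon>']
    by (intro nn_integral_mono) (simp add: b_def ennreal_mult[symmetric] ennreal_leI)
  also have "\<dots> = ennreal ((DIM('a) + 1) powr q) * (\<integral>\<^sup>+x. ennreal (indicator (ball 0 (exp (-1))) x *
      (norm (x::'a) powr (- real DIM('a)) * (- ln (norm x)) powr (- b))) \<partial>lborel)"
    by (rule nn_integral_cmult) measurable
  also have "\<dots> < \<infinity>"
    using nn_integral_ball_log_singularity[OF \<open>1 < b\<close> _ \<open>exp (-1) < 1\<close>, where 'a='a]
    by (simp add: ennreal_mult_less_top)
  finally show ?thesis
    unfolding X_space_def using integrable_imp_L1_loc integrable_phi0[OF \<epsilon>'] by simp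
qed

theorem lemma4p1:
  fixes q \<epsilon> :: real
  assumes "0 \<le> q" and "q < real DIM('a::euclidean_space) / 2"
    and "0 < \<epsilon>" and "\<epsilon> < real DIM('a) / 2 - q"
  shows "(phi0 \<epsilon> :: 'a \<Rightarrow> real) \<in> X_space q
       \<and> integrable lebesgue (phi0 \<epsilon> :: 'a \<Rightarrow> real)
       \<and> (\<forall>T>0. \<not> (\<exists>\<gamma>0>0. \<forall>\<tau>. 0 < \<tau> \<and> \<tau> < T \<and> \<tau> \<noteq> 1 \<longrightarrow>
             (LINT x:ball 0 \<tau>|lebesgue. (phi0 \<epsilon> :: 'a \<Rightarrow> real) x)
               \<le> \<gamma>0 * \<bar>ln \<tau>\<bar> powr (- real DIM('a) / 2)))"
proof -
  have \<epsilon>: "\<epsilon> < real DIM('a) / 2"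
    using assms by linarith
  have "\<not> (\<forall>\<tau>. 0 < \<tau> \<and> \<tau> < T \<and> \<tau> \<noteq> 1 \<longrightarrow>
      (LINT x:ball 0 \<tau>|lebesgue. (phi0 \<epsilon> :: 'a \<Rightarrow> real) x) \<le> \<gamma> * \<bar>ln \<tau>\<bar> powr (- real DIM('a) / 2))"
    if "0 < T" for T \<gamma>
    using set_integral_phi0_ball_not_log_bounded[OF \<open>0 < \<epsilon>\<close> \<epsilon> that, of \<gamma>] by force
  then show ?thesis
    using phi0_in_X_space[OF \<open>0 \<le> q\<close> \<open>\<epsilon> < real DIM('a) / 2 - q\<close>] integrable_phi0[OF \<epsilon>]
    by blast
qed

end
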